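(* In the setting of the context: (i) all diagonal elements of $\mathbf{A}(0)$ and of $\breve{\mathbf{A}}(-1)$ are positive; (ii) for every $k\in\mathbb{Z}_+$, $\sum_{l=k}^\infty\mathbf{A}(l)>\mathbf{O}$ and $\sum_{l=k-1}^\infty\breve{\mathbf{A}}(l)>\mathbf{O}$ (elementwise strictly positive).
   Context: BMAP: $M\in\mathbb{N}$, $\mathbb{M}=\{1,\dots,M\}$; $\mathbf{C}$ an $M\times M$ matrix with negative diagonal and nonnegative off-diagonal entries, $\mathbf{D}(k)$ ($k\in\mathbb{N}$) nonnegative $M\times M$ matrices with $(\mathbf{C}+\sum_k\mathbf{D}(k))\mathbf{e}=\mathbf{0}$ ($\mathbf{e}$ column of ones, $\mathbf{I}$ identity); $\mathbf{D}=\sum_k\mathbf{D}(k)$; the BMAP $\{(N(t),J(t))\}$ on $\mathbb{Z}_+\times\mathbb{M}$, $N(0)=0$: $J$ jumps $i\to j\neq i$ without arrivals at rate $[\mathbf{C}]_{ij}$, and $k$ arrivals with a transition $i\to j$ occur at rate $[\mathbf{D}(k)]_{ij}$. $\mathbf{C}+\mathbf{D}$ is irreducible with stationary vector $\boldsymbol{\pi}$ and $\lambda=\boldsymbol{\pi}\sum_kk\mathbf{D}(k)\mathbf{e}>0$. $H$ is a distribution function on $[0,\infty)$ with mean $h\in(0,\infty)$, $T\sim H$ independent of the BMAP, and $\rho=\lambda h<1$. $[\mathbf{A}(k)]_{ij}=\mathbb{P}(N(T)=k,J(T)=j\mid J(0)=i)$, $k\in\mathbb{Z}_+$. Fix $\mu\in(0,\infty)$,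 let $\theta=\max_{i\in\mathbb{M}}|[\mathbf{C}]_{ii}|$, and define $\breve{\mathbf{A}}(-1)=\frac{\mu}{\mu+\theta}\mathbf{A}(0)$, $\breve{\mathbf{A}}(0)=\frac{\theta}{\mu+\theta}\mathbf{I}+\frac{\mu}{\mu+\theta}\mathbf{A}(1)$, $\breve{\mathbf{A}}(k)=\frac{\mu}{\mu+\theta}\mathbf{A}(k+1)$ for $k\in\mathbb{N}$. *)

theory Defs
  imports "HOL-Analysis.Analysis" "HOL-Probability.Probability"
begin

type_synonym 'm mat = "real^'m^'m"

definition mpow :: "'m::finite mat \<Rightarrow> nat \<Rightarrow> 'm mat" where
  "mpow M n = ((\<lambda>X. X ** M) ^^ n) (mat 1)"

definition mexp :: "'m::finite mat \<Rightarrow> 'm mat" where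
  "mexp M = (\<chi> i j. (\<Sum>n. mpow M n $ i $ j / fact n))"

text \<open>Transition probabilities of the BMAP:
  bmapP C D k t $ i $ j = P(N(t) = k, J(t) = j | J(0) = i).
  Zero arrivals: exp(Ct). k arrivals: decomposition at the epoch s of the last batch
  arrival (of size l, 1 <= l <= k):
  P(k,t) = sum_{l=1..k} int_0^t P(k-l,s) D(l) exp(C(t-s)) ds.\<close>
function bmapP :: "'m::finite mat \<Rightarrow> (nat \<Rightarrow> 'm mat) \<Rightarrow> nat \<Rightarrow> real \<Rightarrow> 'm mat" where
  "bmapP C D k t =
     (if k = 0 then mexp (t *\<^sub>R C)
      else (\<chi> i j. integral {0..t}
              (\<lambda>s. (\<Sum>l\<in>{1..k}. bmapP C D (k - l) s ** D l ** mexp ((t - s) *\<^sub>R C)) $ i $ j)))"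
  by pat_completeness auto
termination
  by (relation "Wellfounded.measure (\<lambda>(C, D, k, t). k)") auto

declare bmapP.simps[simp del]

text \<open>A(k) = P(N(T)=k, J(T)=j | J(0)=i), T ~ H independent (H given as a probability measure).\<close>
definition Amat :: "'m::finite mat \<Rightarrow> (nat \<Rightarrow> 'm mat) \<Rightarrow> real measure \<Rightarrow> nat \<Rightarrow> 'm mat" where
  "Amat C D H k = (\<chi> i j. (\<integral>t. bmapP C D k t $ i $ j \<partial>H))"

definition theta :: "'m::finite mat \<Rightarrow> real" where
  "theta C = Max {\<bar>C $ i $ i\<bar> | i. True}"

definition Abreve :: "'m::finite mat \<Rightarrow> (nat \<Rightarrow> 'm mat) \<Rightarrow> real measure \<Rightarrow> real \<Rightarrow> int \<Rightarrow> 'm mat" where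
  "Abreve C D H \<mu> k =
     (if k = -1 then (\<mu> / (\<mu> + theta C)) *\<^sub>R Amat C D H 0
      else if k = 0 then (theta C / (\<mu> + theta C)) *\<^sub>R mat 1 + (\<mu> / (\<mu> + theta C)) *\<^sub>R Amat C D H 1
      else if k > 0 then (\<mu> / (\<mu> + theta C)) *\<^sub>R Amat C D H (nat k + 1)
      else 0)"

definition Dtot :: "(nat \<Rightarrow> 'm::finite mat) \<Rightarrow> 'm mat" where
  "Dtot D = (\<chi> i j. (\<Sum>k. D (Suc k) $ i $ j))"

definition gen_irreducible :: "'m::finite mat \<Rightarrow> bool" where
  "gen_irreducible Q \<longleftrightarrow> (\<forall>i j. (i, j) \<in> {(a, b). a \<noteq> b \<and> Q $ a $ b > 0}\<^sup>*)"

definition stationary :: "'m::finite mat \<Rightarrow> real^'m \<Rightarrow> bool" where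
  "stationary Q p \<longleftrightarrow> p v* Q = 0 \<and> (\<Sum>i\<in>UNIV. p $ i) = 1 \<and> (\<forall>i. p $ i \<ge> 0)"

definition arrival_rate :: "(nat \<Rightarrow> 'm::finite mat) \<Rightarrow> real^'m \<Rightarrow> real" where
  "arrival_rate D p = (\<Sum>i\<in>UNIV. p $ i * (\<Sum>k. real (Suc k) * (\<Sum>j\<in>UNIV. D (Suc k) $ i $ j)))"

end

theory Submission imports Defs begin

text \<open>Uniformization writes \<open>exp (C t) = exp (- \<theta> t) exp ((C + \<theta> I) t)\<close> with
  \<open>C + \<theta> I \<ge> 0\<close>, so \<open>exp (C t)\<close> is nonnegative, and positive at \<open>(i, j)\<close> whenever \<open>j\<close> is
  reachable from \<open>i\<close> along positive off-diagonal rates of \<open>C\<close>. Through the convolution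
  recursion for \<open>P(k, t)\<close>, every such path interleaved with batch arrivals gives
  \<open>P(l, t)\<^sub>i\<^sub>j > 0\<close> for all \<open>t > 0\<close>, where \<open>l\<close> is the number of arrivals; irreducibility of
  \<open>C + D\<close> and one positive entry of some \<open>D(m)\<close> (guaranteed by \<open>\<lambda> > 0\<close>) yield such paths with
  arbitrarily many arrivals. Integrating against \<open>H\<close>, which is not concentrated at \<open>0\<close> since
  \<open>h > 0\<close>, gives positivity of the diagonal of \<open>A(0)\<close> and of every tail \<open>\<Sum>l\<ge>k. A(l)\<close>. These
  tails converge because the forward equations make the row sums of \<open>\<Sum>k\<le>n. P(k, t)\<close>
  nonincreasing in \<open>t\<close>, hence at most \<open>1\<close>. Finally \<open>A\<breve>\<close> is a positive multiple of the shifted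
  \<open>A\<close> plus a nonnegative diagonal term.\<close>

section \<open>Matrix powers and the matrix exponential\<close>

lemma matrix_mult_entry: "(A ** B) $ i $ j = (\<Sum>k\<in>UNIV. A $ i $ k * B $ k $ j)"
  by (simp add: matrix_matrix_mult_def)

lemma mat_one_entry: "mat 1 $ i $ j = (if i = j then 1 else 0)"
  by (simp add: mat_def)

lemma matrix_mult_nonneg:
  assumes "\<And>a b. A $ a $ b \<ge> 0" "\<And>a b. B $ a $ b \<ge> (0::real)"
  shows "(A ** B) $ i $ j \<ge> 0"
  unfolding matrix_mult_entry by (intro sum_nonneg mult_nonneg_nonneg assms)

lemma sum_matrix_mult_right: "sum f S ** (Y::'m::finite mat) = (\<Sum>k\<in>S. f k ** Y)"
  by (induction S rule: infinite_finite_induct)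
     (simp_all add: vec_eq_iff matrix_mult_entry sum.distrib distrib_right)

lemma matrix_mult_scaleR_mat_one_right: "X ** (a *\<^sub>R mat 1) = a *\<^sub>R (X::'m::finite mat)"
  by (metis matrix_mul_rid matrix_scalar_ac)

lemma matrix_mult_scaleR_mat_one_left: "(a *\<^sub>R mat 1) ** X = a *\<^sub>R (X::'m::finite mat)"
  by (metis matrix_mul_lid scalar_matrix_assoc)

lemma sum_row_matrix_mult:
  "(\<Sum>j\<in>UNIV. (X ** Y) $ i $ j) = (\<Sum>r\<in>UNIV. X $ i $ r * (\<Sum>j\<in>UNIV. Y $ r $ j))"
  unfolding matrix_mult_entry sum_distrib_left by (rule sum.swap)

lemma mpow_0 [simp]: "mpow M 0 = mat 1"
  by (simp add: mpow_def)

lemma mpow_Suc: "mpow M (Suc n) = mpow M n ** M"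
  by (simp add: mpow_def)

lemma mpow_scaleR: "mpow (c *\<^sub>R M) n = (c ^ n) *\<^sub>R mpow M n"
proof (induction n)
  case (Suc n)
  show ?case
    by (simp add: mpow_Suc Suc vec_eq_iff matrix_mult_entry sum_distrib_left algebra_simps)
qed simp

lemma mpow_mat_one: "mpow (mat 1 :: 'm::finite mat) n = mat 1"
  by (induction n) (simp_all add: mpow_Suc)

lemma mpow_nonneg:
  assumes "\<And>a b. M $ a $ b \<ge> 0"
  shows "mpow M n $ i $ j \<ge> 0"
proof (induction n arbitrary: i j)
  case (Suc n)
  then show ?case unfolding mpow_Suc by (intro matrix_mult_nonneg assms)
qed (simp add: mat_one_entry)

lemma mpow_commute:
  assumes "A ** B = (B::'m::finite mat) ** A"
  shows "mpow B n ** A = A ** mpow B n"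
proof (induction n)
  case (Suc n)
  have "mpow B (Suc n) ** A = mpow B n ** (B ** A)"
    by (simp add: mpow_Suc matrix_mul_assoc)
  also have "\<dots> = (mpow B n ** A) ** B"
    using assms by (simp add: matrix_mul_assoc[symmetric])
  also have "\<dots> = A ** mpow B (Suc n)"
    using Suc by (simp add: mpow_Suc matrix_mul_assoc)
  finally show ?case .
qed simp

lemma mpow_binomial:
  assumes AB: "A ** B = (B::'m::finite mat) ** A"
  shows "mpow (A + B) n = (\<Sum>k\<le>n. real (n choose k) *\<^sub>R (mpow A k ** mpow B (n - k)))"
proof (induction n)
  case (Suc n)
  have A: "\<And>k m. mpow A k ** mpow B m ** A = mpow A (Suc k) ** mpow B m"
    by (metis mpow_commute[OF AB] matrix_mul_assoc mpow_Suc)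
  have B: "\<And>k m. mpow A k ** mpow B m ** B = mpow A k ** mpow B (Suc m)"
    by (metis matrix_mul_assoc mpow_Suc)
  have "mpow (A + B) (Suc n)
      = (\<Sum>k\<le>n. real (n choose k) *\<^sub>R (mpow A k ** mpow B (n - k))) ** (A + B)"
    by (simp add: mpow_Suc Suc)
  also have "\<dots> = (\<Sum>k\<le>n. real (n choose k) *\<^sub>R (mpow A (Suc k) ** mpow B (n - k)))
      + (\<Sum>k\<le>n. real (n choose k) *\<^sub>R (mpow A k ** mpow B (Suc n - k)))"
    by (simp add: matrix_add_ldistrib sum_matrix_mult_right sum.distrib
        scalar_matrix_assoc[symmetric] A B Suc_diff_le)
  also have "(\<Sum>k\<le>n. real (n choose k) *\<^sub>R (mpow A k ** mpow B (Suc n - k)))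
      = (\<Sum>k\<le>Suc n. real (n choose k) *\<^sub>R (mpow A k ** mpow B (Suc n - k)))"
    by simp
  also have "\<dots> = mpow B (Suc n)
      + (\<Sum>k\<le>n. real (n choose Suc k) *\<^sub>R (mpow A (Suc k) ** mpow B (n - k)))"
    by (subst sum.atMost_Suc_shift) simp
  finally have "mpow (A + B) (Suc n) = mpow B (Suc n) +
      (\<Sum>k\<le>n. real (n choose k) *\<^sub>R (mpow A (Suc k) ** mpow B (n - k)) +
                real (n choose Suc k) *\<^sub>R (mpow A (Suc k) ** mpow B (n - k)))"
    by (simp add: sum.distrib algebra_simps)
  also have "\<dots> = (\<Sum>k\<le>Suc n. real (Suc n choose k) *\<^sub>R (mpow A k ** mpow B (Suc n - k)))"
    by (subst sum.atMost_Suc_shift) (simp add: scaleR_add_left)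
  finally show ?case .
qed simp

definition mexp_coeff :: "'m::finite mat \<Rightarrow> 'm \<Rightarrow> 'm \<Rightarrow> nat \<Rightarrow> real" where
  "mexp_coeff M i j n = mpow M n $ i $ j / fact n"

definition mat_abs_sum :: "'m::finite mat \<Rightarrow> real" where
  "mat_abs_sum M = (\<Sum>a\<in>UNIV. \<Sum>b\<in>UNIV. \<bar>M $ a $ b\<bar>)"

lemma mpow_entry_bound: "\<bar>mpow M n $ i $ j\<bar> \<le> mat_abs_sum M ^ n"
proof (induction n arbitrary: j)
  case (Suc n)
  have col: "(\<Sum>k\<in>UNIV. \<bar>M $ k $ j\<bar>) \<le> mat_abs_sum M"
    unfolding mat_abs_sum_def by (intro sum_mono member_le_sum) auto
  have "\<bar>mpow M (Suc n) $ i $ j\<bar> \<le> (\<Sum>k\<in>UNIV. \<bar>mpow M n $ i $ k\<bar> * \<bar>M $ k $ j\<bar>)"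
    unfolding mpow_Suc matrix_mult_entry by (rule order_trans[OF sum_abs]) (simp add: abs_mult)
  also have "\<dots> \<le> (\<Sum>k\<in>UNIV. mat_abs_sum M ^ n * \<bar>M $ k $ j\<bar>)"
    by (intro sum_mono mult_right_mono Suc) auto
  also have "\<dots> \<le> mat_abs_sum M ^ n * mat_abs_sum M"
    unfolding sum_distrib_left[symmetric]
    by (intro mult_left_mono col) (simp add: mat_abs_sum_def sum_nonneg)
  finally show ?case by (simp add: mult.commute)
qed (simp add: mat_one_entry)

lemma summable_norm_mexp_coeff: "summable (\<lambda>n. norm (mexp_coeff M i j n * x ^ n))"
proof (rule summable_comparison_test'[OF summable_exp])
  fix n
  have "norm (norm (mexp_coeff M i j n * x ^ n)) = \<bar>mpow M n $ i $ j\<bar> * \<bar>x\<bar> ^ n / fact n"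
    by (simp add: mexp_coeff_def abs_mult power_abs)
  also have "\<dots> \<le> mat_abs_sum M ^ n * \<bar>x\<bar> ^ n / fact n"
    by (intro divide_right_mono mult_right_mono mpow_entry_bound) auto
  finally show "norm (norm (mexp_coeff M i j n * x ^ n))
      \<le> inverse (fact n) * (mat_abs_sum M * \<bar>x\<bar>) ^ n"
    by (simp add: power_mult_distrib field_simps)
qed

lemma summable_mexp_coeff: "summable (\<lambda>n. mexp_coeff M i j n * x ^ n)"
  by (rule summable_norm_cancel[OF summable_norm_mexp_coeff])

lemma mexp_scaleR_entry: "mexp (x *\<^sub>R M) $ i $ j = (\<Sum>n. mexp_coeff M i j n * x ^ n)"
  by (simp add: mexp_def mpow_scaleR mexp_coeff_def mult.commute)

lemma mexp_entry: "mexp M $ i $ j = (\<Sum>n. mexp_coeff M i j n)"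
  using mexp_scaleR_entry[of 1 M i j] by simp

lemma mexp_add_commuting:
  assumes AB: "A ** B = (B::'m::finite mat) ** A"
  shows "mexp (A + B) = mexp A ** mexp B"
proof -
  have sm: "summable (\<lambda>n. norm (mexp_coeff M i j n))" for M :: "'m mat" and i j
    using summable_norm_mexp_coeff[of M i j 1] by simp
  have "mexp (A + B) $ i $ j = (mexp A ** mexp B) $ i $ j" for i j
  proof -
    have coeff: "mexp_coeff (A + B) i j n
        = (\<Sum>m\<in>UNIV. \<Sum>k\<le>n. mexp_coeff A i m k * mexp_coeff B m j (n - k))" for n
    proof -
      have "mexp_coeff (A + B) i j n
          = (\<Sum>k\<le>n. real (n choose k) * (mpow A k ** mpow B (n - k)) $ i $ j) / fact n"
        by (simp add: mexp_coeff_def mpow_binomial[OF AB] sum_component)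
      also have "\<dots> = (\<Sum>k\<le>n. (mpow A k ** mpow B (n - k)) $ i $ j / (fact k * fact (n - k)))"
        unfolding sum_divide_distrib
        by (intro sum.cong refl) (simp add: binomial_fact field_simps)
      also have "\<dots> = (\<Sum>k\<le>n. \<Sum>m\<in>UNIV. mexp_coeff A i m k * mexp_coeff B m j (n - k))"
        by (simp add: matrix_mult_entry mexp_coeff_def sum_divide_distrib)
      finally show ?thesis by (simp add: sum.swap[of _ "{..n}"])
    qed
    have "mexp (A + B) $ i $ j
        = (\<Sum>n. \<Sum>m\<in>UNIV. \<Sum>k\<le>n. mexp_coeff A i m k * mexp_coeff B m j (n - k))"
      by (simp add: mexp_entry coeff)
    also have "\<dots> = (\<Sum>m\<in>UNIV. \<Sum>n. \<Sum>k\<le>n. mexp_coeff A i m k * mexp_coeff B m j (n - k))"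
      by (rule suminf_sum) (intro summable_Cauchy_product sm)
    also have "\<dots> = (\<Sum>m\<in>UNIV. (\<Sum>n. mexp_coeff A i m n) * (\<Sum>n. mexp_coeff B m j n))"
      by (intro sum.cong refl Cauchy_product[symmetric] sm)
    also have "\<dots> = (mexp A ** mexp B) $ i $ j"
      by (simp add: matrix_mult_entry mexp_entry)
    finally show ?thesis .
  qed
  then show ?thesis by (simp add: vec_eq_iff)
qed

lemma mexp_scaleR_add: "mexp ((s + u) *\<^sub>R M) = mexp (s *\<^sub>R M) ** mexp (u *\<^sub>R (M::'m::finite mat))"
proof -
  have "(s *\<^sub>R M) ** (u *\<^sub>R M) = (u *\<^sub>R M) ** (s *\<^sub>R M)"
    by (simp add: matrix_scalar_ac scalar_matrix_assoc[symmetric])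
  from mexp_add_commuting[OF this] show ?thesis by (simp add: scaleR_add_left)
qed

lemma mexp_scaleR_mat_one: "mexp (c *\<^sub>R (mat 1 :: 'm::finite mat)) = exp c *\<^sub>R mat 1"
proof -
  have "mexp (c *\<^sub>R (mat 1 :: 'm mat)) $ i $ j = (exp c *\<^sub>R (mat 1 :: 'm mat)) $ i $ j" for i j
  proof (cases "i = j")
    case True
    have "(\<lambda>n. mexp_coeff (mat 1 :: 'm mat) i j n * c ^ n) = (\<lambda>n. c ^ n /\<^sub>R fact n)"
      using True by (simp add: mexp_coeff_def mpow_mat_one mat_one_entry field_simps)
    with True show ?thesis
      by (simp add: mexp_scaleR_entry mat_one_entry exp_def)
  qed (simp add: mexp_scaleR_entry mexp_coeff_def mpow_mat_one mat_one_entry)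
  then show ?thesis by (simp add: vec_eq_iff)
qed

lemma mexp_zero: "mexp (0::'m::finite mat) = mat 1"
  using mexp_scaleR_mat_one[of 0] by simp

lemma mexp_shift_diagonal:
  fixes M :: "'m::finite mat"
  shows "mexp (t *\<^sub>R M) = exp (- c * t) *\<^sub>R mexp (t *\<^sub>R (M + c *\<^sub>R mat 1))"
proof -
  have eq: "t *\<^sub>R M = t *\<^sub>R (M + c *\<^sub>R mat 1) + (- c * t) *\<^sub>R mat 1"
    by (simp add: algebra_simps)
  have comm: "(t *\<^sub>R (M + c *\<^sub>R mat 1)) ** ((- c * t) *\<^sub>R mat 1)
      = ((- c * t) *\<^sub>R mat 1) ** (t *\<^sub>R (M + c *\<^sub>R mat 1))"
    by (simp only: matrix_mult_scaleR_mat_one_right matrix_mult_scaleR_mat_one_left)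
  show ?thesis
    unfolding eq mexp_add_commuting[OF comm] mexp_scaleR_mat_one
    by (simp only: matrix_mult_scaleR_mat_one_right)
qed

lemma mexp_has_real_derivative:
  "((\<lambda>t. mexp (t *\<^sub>R M) $ i $ j) has_real_derivative (mexp (t *\<^sub>R M) ** M) $ i $ j) (at t)"
proof -
  have "((\<lambda>t. \<Sum>n. mexp_coeff M i j n * t ^ n) has_real_derivative
      (\<Sum>n. diffs (mexp_coeff M i j) n * t ^ n)) (at t)"
    by (rule termdiffs_strong_converges_everywhere) (rule summable_mexp_coeff)
  moreover have "(\<Sum>n. diffs (mexp_coeff M i j) n * t ^ n)
      = (\<Sum>n. \<Sum>m\<in>UNIV. mexp_coeff M i m n * t ^ n * M $ m $ j)"
  proof (rule suminf_cong)
    fix n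
    have "diffs (mexp_coeff M i j) n * t ^ n = t ^ n * mpow M (Suc n) $ i $ j / fact n"
      by (simp add: diffs_def mexp_coeff_def fact_Suc del: of_nat_Suc)
    then show "diffs (mexp_coeff M i j) n * t ^ n
        = (\<Sum>m\<in>UNIV. mexp_coeff M i m n * t ^ n * M $ m $ j)"
      by (simp add: mpow_Suc matrix_mult_entry mexp_coeff_def sum_distrib_left
          sum_divide_distrib field_simps)
  qed
  moreover have "\<dots> = (\<Sum>m\<in>UNIV. \<Sum>n. mexp_coeff M i m n * t ^ n * M $ m $ j)"
    by (rule suminf_sum) (intro summable_mult2 summable_mexp_coeff)
  moreover have "\<dots> = (\<Sum>m\<in>UNIV. (\<Sum>n. mexp_coeff M i m n * t ^ n) * M $ m $ j)"
    by (intro sum.cong refl suminf_mult2[symmetric] summable_mexp_coeff)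
  ultimately show ?thesis
    by (simp add: matrix_mult_entry mexp_scaleR_entry)
qed

lemma continuous_on_mexp: "continuous_on A (\<lambda>t. mexp (t *\<^sub>R M) $ i $ j)"
  by (intro continuous_at_imp_continuous_on ballI DERIV_isCont[OF mexp_has_real_derivative])

lemma mexp_coeff_le_mexp:
  assumes "\<And>a b. M $ a $ b \<ge> 0" "t \<ge> 0"
  shows "mexp_coeff M i j n * t ^ n \<le> mexp (t *\<^sub>R M) $ i $ j"
  unfolding mexp_scaleR_entry
  by (rule sum_le_suminf[OF summable_mexp_coeff, of "{n}", simplified])
     (simp_all add: mexp_coeff_def mpow_nonneg assms)

section \<open>The phase process without arrivals\<close>

locale bmap =
  fixes C :: "'m::finite mat" and D :: "nat \<Rightarrow> 'm mat"
  assumes C_diag: "\<And>i. C $ i $ i < 0"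
    and C_off: "\<And>i j. i \<noteq> j \<Longrightarrow> C $ i $ j \<ge> 0"
    and D_nonneg: "\<And>k i j. k \<ge> 1 \<Longrightarrow> D k $ i $ j \<ge> 0"
    and rows: "\<And>i. (\<lambda>k. \<Sum>j\<in>UNIV. D (Suc k) $ i $ j) sums (- (\<Sum>j\<in>UNIV. C $ i $ j))"
begin

definition expC :: "real \<Rightarrow> 'm mat" where
  "expC t = mexp (t *\<^sub>R C)"

definition unif :: "'m mat" where
  "unif = C + theta C *\<^sub>R mat 1"

definition C_edges :: "('m \<times> 'm) set" where
  "C_edges = {(a, b). a \<noteq> b \<and> C $ a $ b > 0}"

lemma abs_diag_le_theta: "\<bar>C $ i $ i\<bar> \<le> theta C"
proof -
  have "{\<bar>C $ i $ i\<bar> | i. True} = range (\<lambda>i. \<bar>C $ i $ i\<bar>)" by auto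
  then show ?thesis unfolding theta_def by simp
qed

lemma theta_pos: "theta C > 0"
  using abs_diag_le_theta[of undefined] C_diag[of undefined] by linarith

lemma unif_nonneg: "unif $ a $ b \<ge> 0"
  using abs_diag_le_theta[of a] C_off[of a b] by (cases "a = b") (auto simp: unif_def mat_one_entry)

lemma expC_eq_unif: "expC t $ i $ j = exp (- theta C * t) * mexp (t *\<^sub>R unif) $ i $ j"
  unfolding expC_def unif_def by (subst mexp_shift_diagonal[of t C "theta C"]) simp

lemma expC_nonneg: "t \<ge> 0 \<Longrightarrow> expC t $ i $ j \<ge> 0"
  using mexp_coeff_le_mexp[OF unif_nonneg, of t i j 0]
  by (auto simp: expC_eq_unif mexp_coeff_def mat_one_entry split: if_splits)

lemma unif_pow_pos_of_path: "(i, j) \<in> C_edges\<^sup>* \<Longrightarrow> \<exists>n. mpow unif n $ i $ j > 0"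
proof (induction rule: rtrancl_induct)
  case base
  show ?case by (intro exI[of _ 0]) (simp add: mat_one_entry)
next
  case (step a b)
  then obtain n where n: "mpow unif n $ i $ a > 0" by blast
  have ab: "unif $ a $ b > 0"
    using step(2) by (simp add: C_edges_def unif_def mat_one_entry)
  have "mpow unif n $ i $ a * unif $ a $ b \<le> (\<Sum>k\<in>UNIV. mpow unif n $ i $ k * unif $ k $ b)"
    by (rule member_le_sum) (auto intro: mult_nonneg_nonneg mpow_nonneg unif_nonneg)
  then have "mpow unif (Suc n) $ i $ b > 0"
    using mult_pos_pos[OF n ab] by (simp add: mpow_Suc matrix_mult_entry)
  then show ?case by blast
qed

lemma expC_pos_of_path:
  assumes "(i, j) \<in> C_edges\<^sup>*" "t > 0"
  shows "expC t $ i $ j > 0"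
proof -
  obtain n where n: "mpow unif n $ i $ j > 0"
    using unif_pow_pos_of_path[OF assms(1)] by blast
  have "mexp_coeff unif i j n * t ^ n \<le> mexp (t *\<^sub>R unif) $ i $ j"
    by (rule mexp_coeff_le_mexp[OF unif_nonneg]) (use assms in simp)
  moreover have "mexp_coeff unif i j n * t ^ n > 0"
    using n assms(2) by (simp add: mexp_coeff_def)
  ultimately show ?thesis
    unfolding expC_eq_unif by (intro mult_pos_pos) auto
qed

lemma expC_diag_pos: "t > 0 \<Longrightarrow> expC t $ i $ i > 0"
  by (rule expC_pos_of_path) simp_all

lemma expC_0: "expC 0 = mat 1"
  by (simp add: expC_def mexp_zero)

lemma expC_add: "expC (s + u) = expC s ** expC u"
  unfolding expC_def by (rule mexp_scaleR_add)

lemma expC_has_real_derivative: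
  "((\<lambda>t. expC t $ i $ j) has_real_derivative (expC t ** C) $ i $ j) (at t)"
  unfolding expC_def by (rule mexp_has_real_derivative)

lemma continuous_on_expC: "continuous_on A (\<lambda>t. expC t $ i $ j)"
  unfolding expC_def by (rule continuous_on_mexp)

end

section \<open>The Kolmogorov forward equations\<close>

lemma integral_has_real_derivative_atLeast:
  assumes "continuous_on {0..} h" "t \<ge> 0"
  shows "((\<lambda>x. integral {0..x} h) has_real_derivative h t) (at t within {0..})"
proof -
  have "((\<lambda>x. integral {0..x} h) has_real_derivative h t) (at t within {0..t+1})"
    by (rule integral_has_real_derivative) (use assms in \<open>auto intro: continuous_on_subset\<close>)
  moreover have "at t within {0..t+1} = at t within {0::real..}"
    by (rule at_within_nhd[where S="{t - 1 <..< t + 1}"]) auto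
  ultimately show ?thesis by simp
qed

context bmap
begin

definition arrival_term :: "nat \<Rightarrow> real \<Rightarrow> 'm mat" where
  "arrival_term k s = (\<Sum>l\<in>{1..k}. bmapP C D (k - l) s ** D l)"

definition continuous_entries :: "(real \<Rightarrow> 'm mat) \<Rightarrow> bool" where
  "continuous_entries F \<longleftrightarrow> (\<forall>i j. continuous_on {0..} (\<lambda>t. F t $ i $ j))"

lemma bmapP_0: "bmapP C D 0 t = expC t"
  by (subst bmapP.simps) (simp add: expC_def)

lemma bmapP_eq_integral:
  "k > 0 \<Longrightarrow> bmapP C D k t $ i $ j = integral {0..t} (\<lambda>s. (arrival_term k s ** expC (t - s)) $ i $ j)"
  by (subst bmapP.simps) (simp add: arrival_term_def expC_def sum_matrix_mult_right)

lemma bmapP_at_0: "k > 0 \<Longrightarrow> bmapP C D k 0 $ i $ j = 0"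
  by (simp add: bmapP_eq_integral)

lemma continuous_entries_mult:
  "continuous_entries A \<Longrightarrow> continuous_entries B \<Longrightarrow> continuous_entries (\<lambda>t. A t ** B t)"
  unfolding continuous_entries_def matrix_mult_entry
  by (intro allI continuous_on_sum continuous_on_mult) auto

lemma continuous_entries_sum:
  "(\<And>l. l \<in> S \<Longrightarrow> continuous_entries (F l)) \<Longrightarrow> continuous_entries (\<lambda>t. \<Sum>l\<in>S. F l t)"
  unfolding continuous_entries_def sum_component by (auto intro!: continuous_on_sum)

lemma continuous_entries_const: "continuous_entries (\<lambda>t. M)"
  unfolding continuous_entries_def by simp

lemma continuous_entries_expC_diff: "continuous_entries (\<lambda>s. expC (t - s))"
  unfolding continuous_entries_def
  by (intro allI continuous_on_compose2[OF continuous_on_expC[of UNIV]] continuous_intros) auto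

lemma continuous_entries_arrival_term:
  "(\<And>m. m < k \<Longrightarrow> continuous_entries (bmapP C D m)) \<Longrightarrow> continuous_entries (arrival_term k)"
  unfolding arrival_term_def by (intro continuous_entries_sum continuous_entries_mult continuous_entries_const) auto

text \<open>Since \<open>exp (C (t - s)) = exp (- C s) exp (C t)\<close>, the factor \<open>exp (C t)\<close> can be pulled
  out of the convolution integral, which leaves an integrand independent of \<open>t\<close>.\<close>

lemma bmapP_eq_sum_integral:
  assumes "k > 0" "continuous_entries (arrival_term k)"
  shows "bmapP C D k t $ i $ j
    = (\<Sum>m\<in>UNIV. expC t $ m $ j * integral {0..t} (\<lambda>s. (arrival_term k s ** expC (-s)) $ i $ m))"
proof (cases "t \<ge> 0")
  case True
  have eq: "(arrival_term k s ** expC (t - s)) $ i $ j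
      = (\<Sum>m\<in>UNIV. (arrival_term k s ** expC (-s)) $ i $ m * expC t $ m $ j)" for s
  proof -
    have "arrival_term k s ** expC (t - s) = (arrival_term k s ** expC (-s)) ** expC t"
      using expC_add[of "-s" t] by (simp add: matrix_mul_assoc)
    then show ?thesis by (simp only: matrix_mult_entry)
  qed
  have "continuous_on {0..} (\<lambda>s. (arrival_term k s ** expC (-s)) $ i $ m)" for m
    using continuous_entries_mult[OF assms(2) continuous_entries_expC_diff[of 0]]
    unfolding continuous_entries_def by simp
  then have int: "(\<lambda>s. (arrival_term k s ** expC (-s)) $ i $ m) integrable_on {0..t}" for m
    by (intro integrable_continuous_interval) (rule continuous_on_subset, auto)
  have "bmapP C D k t $ i $ j
      = (\<Sum>m\<in>UNIV. integral {0..t} (\<lambda>s. (arrival_term k s ** expC (-s)) $ i $ m * expC t $ m $ j))"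
    unfolding bmapP_eq_integral[OF assms(1)] eq
    by (rule Henstock_Kurzweil_Integration.integral_sum) (auto intro: integrable_on_mult_left int)
  then show ?thesis
    by (simp add: Henstock_Kurzweil_Integration.integral_mult_left mult.commute)
qed (use assms(1) in \<open>simp add: bmapP_eq_integral\<close>)

lemma bmapP_has_real_derivative_of_continuous:
  assumes k: "k > 0" and cont: "continuous_entries (arrival_term k)" and t: "t \<ge> 0"
  shows "((\<lambda>t. bmapP C D k t $ i $ j) has_real_derivative
      (bmapP C D k t ** C + arrival_term k t) $ i $ j) (at t within {0..})"
proof -
  define F where "F m s = (arrival_term k s ** expC (-s)) $ i $ m" for m s
  have F_cont: "continuous_on {0..} (F m)" for m
    using continuous_entries_mult[OF cont continuous_entries_expC_diff[of 0]]
    unfolding continuous_entries_def F_def by simp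
  have repr: "bmapP C D k x $ i $ r = (\<Sum>m\<in>UNIV. expC x $ m $ r * integral {0..x} (F m))" for x r
    unfolding F_def by (rule bmapP_eq_sum_integral[OF k cont])
  have "((\<lambda>x. \<Sum>m\<in>UNIV. expC x $ m $ j * integral {0..x} (F m)) has_real_derivative
      (\<Sum>m\<in>UNIV. (expC t ** C) $ m $ j * integral {0..t} (F m) + F m t * expC t $ m $ j))
      (at t within {0..})"
    by (intro DERIV_sum DERIV_mult has_field_derivative_at_within[OF expC_has_real_derivative]
        integral_has_real_derivative_atLeast[OF F_cont t])
  moreover have "(\<Sum>m\<in>UNIV. F m t * expC t $ m $ j) = arrival_term k t $ i $ j"
  proof -
    have "(\<Sum>m\<in>UNIV. F m t * expC t $ m $ j) = ((arrival_term k t ** expC (-t)) ** expC t) $ i $ j"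
      unfolding F_def by (rule matrix_mult_entry[symmetric])
    also have "\<dots> = arrival_term k t $ i $ j"
      using expC_add[of "-t" t, symmetric] by (simp add: matrix_mul_assoc[symmetric] expC_0)
    finally show ?thesis .
  qed
  moreover have "(\<Sum>m\<in>UNIV. (expC t ** C) $ m $ j * integral {0..t} (F m))
      = (bmapP C D k t ** C) $ i $ j"
  proof -
    have "(\<Sum>m\<in>UNIV. (expC t ** C) $ m $ j * integral {0..t} (F m))
        = (\<Sum>m\<in>UNIV. \<Sum>r\<in>UNIV. expC t $ m $ r * C $ r $ j * integral {0..t} (F m))"
      by (simp add: matrix_mult_entry sum_distrib_right)
    also have "\<dots> = (\<Sum>r\<in>UNIV. \<Sum>m\<in>UNIV. expC t $ m $ r * C $ r $ j * integral {0..t} (F m))"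
      by (rule sum.swap)
    also have "\<dots> = (bmapP C D k t ** C) $ i $ j"
      by (simp add: matrix_mult_entry repr sum_distrib_left sum_distrib_right mult_ac)
    finally show ?thesis .
  qed
  ultimately show ?thesis
    unfolding repr[abs_def] by (simp add: sum.distrib)
qed

lemma bmapP_has_real_derivative:
  "t \<ge> 0 \<Longrightarrow> ((\<lambda>t. bmapP C D k t $ i $ j) has_real_derivative
      (bmapP C D k t ** C + arrival_term k t) $ i $ j) (at t within {0..})"
proof (induction k arbitrary: t i j rule: less_induct)
  case (less k)
  show ?case
  proof (cases "k = 0")
    case True
    then show ?thesis
      using has_field_derivative_at_within[OF expC_has_real_derivative]
      by (simp add: bmapP_0 arrival_term_def)
  next
    case False
    have "continuous_entries (bmapP C D m)" if "m < k" for m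
      using less.IH[OF that] unfolding continuous_entries_def
      by (auto intro!: continuous_on_eq_continuous_within[THEN iffD2] DERIV_continuous)
    then show ?thesis
      using False less.prems
      by (intro bmapP_has_real_derivative_of_continuous continuous_entries_arrival_term) auto
  qed
qed

lemma continuous_entries_bmapP: "continuous_entries (bmapP C D k)"
  using bmapP_has_real_derivative[of _ k] unfolding continuous_entries_def
  by (auto intro!: continuous_on_eq_continuous_within[THEN iffD2] DERIV_continuous)

lemma continuous_on_convolution:
  "continuous_on {0..t} (\<lambda>s. (arrival_term k s ** expC (t - s)) $ i $ j)"
proof (rule continuous_on_subset)
  show "continuous_on {0..} (\<lambda>s. (arrival_term k s ** expC (t - s)) $ i $ j)"
    using continuous_entries_mult[OF continuous_entries_arrival_term[OF continuous_entries_bmapP]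
        continuous_entries_expC_diff]
    unfolding continuous_entries_def by blast
qed auto

lemma bmapP_nonneg: "t \<ge> 0 \<Longrightarrow> bmapP C D k t $ i $ j \<ge> 0"
proof (induction k arbitrary: t i j rule: less_induct)
  case (less k)
  show ?case
  proof (cases "k = 0")
    case False
    have "arrival_term k s $ a $ b \<ge> 0" if "s \<ge> 0" for s a b
      unfolding arrival_term_def sum_component
      by (intro sum_nonneg matrix_mult_nonneg less.IH D_nonneg) (use that False in auto)
    then have "0 \<le> integral {0..t} (\<lambda>s. (arrival_term k s ** expC (t - s)) $ i $ j)"
      by (intro Henstock_Kurzweil_Integration.integral_nonneg integrable_continuous_interval
          continuous_on_convolution matrix_mult_nonneg expC_nonneg) auto
    then show ?thesis using False by (simp add: bmapP_eq_integral)
  qed (use less.prems in \<open>simp add: bmapP_0 expC_nonneg\<close>)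
qed

lemma arrival_term_nonneg: "s \<ge> 0 \<Longrightarrow> arrival_term k s $ a $ b \<ge> 0"
  unfolding arrival_term_def sum_component
  by (intro sum_nonneg matrix_mult_nonneg bmapP_nonneg D_nonneg) auto

end

section \<open>Row sums of the transition matrices\<close>

lemma sum_triangle_le_sum_square:
  fixes f :: "nat \<Rightarrow> nat \<Rightarrow> real"
  assumes "\<And>m l. l \<ge> 1 \<Longrightarrow> f m l \<ge> 0"
  shows "(\<Sum>k\<le>n. \<Sum>l\<in>{1..k}. f (k - l) l) \<le> (\<Sum>m\<le>n. \<Sum>l\<in>{1..n}. f m l)"
proof -
  have "(\<Sum>k\<le>n. \<Sum>l\<in>{1..k}. f (k - l) l)
      = (\<Sum>x\<in>(SIGMA k:{..n}. {1..k}). f (fst x - snd x) (snd x))"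
    by (subst sum.Sigma) (auto simp: split_def)
  also have "\<dots> \<le> (\<Sum>y\<in>{..n} \<times> {1..n}. f (fst y) (snd y))"
  proof (rule sum_le_included[where i="\<lambda>y. (fst y + snd y, snd y)"])
    show "\<forall>x\<in>(SIGMA k:{..n}. {1..k}). \<exists>y\<in>{..n} \<times> {1..n}. (fst y + snd y, snd y) = x \<and>
          f (fst x - snd x) (snd x) \<le> f (fst y) (snd y)"
      by (intro ballI bexI[of _ "(fst x - snd x, snd x)" for x]) auto
  qed (auto simp: assms)
  also have "\<dots> = (\<Sum>m\<le>n. \<Sum>l\<in>{1..n}. f m l)"
    by (subst sum.cartesian_product) (simp add: split_def)
  finally show ?thesis .
qed

context bmap
begin

lemma sum_D_row_le: "(\<Sum>l\<in>{1..n}. \<Sum>j\<in>UNIV. D l $ r $ j) \<le> - (\<Sum>j\<in>UNIV. C $ r $ j)"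
proof -
  have "(\<Sum>l\<in>{1..n}. \<Sum>j\<in>UNIV. D l $ r $ j) = (\<Sum>k<n. \<Sum>j\<in>UNIV. D (Suc k) $ r $ j)"
    using sum.atLeast1_atMost_eq[of "\<lambda>l. \<Sum>j\<in>UNIV. D l $ r $ j" n] by simp
  also have "\<dots> \<le> (\<Sum>k. \<Sum>j\<in>UNIV. D (Suc k) $ r $ j)"
    by (rule sum_le_suminf) (use sums_summable[OF rows] in \<open>auto intro!: sum_nonneg D_nonneg\<close>)
  also have "\<dots> = - (\<Sum>j\<in>UNIV. C $ r $ j)"
    using sums_unique[OF rows] by simp
  finally show ?thesis .
qed

text \<open>The derivative of the truncated row sum \<open>\<Sum>k\<le>n. P(k,t) e\<close> is nonpositive: the batches
  counted in the arrival terms are at most the total outflow rates \<open>- C e\<close>.\<close>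

lemma sum_row_derivative_nonpos:
  assumes t: "t \<ge> 0"
  shows "(\<Sum>k\<le>n. \<Sum>j\<in>UNIV. (bmapP C D k t ** C + arrival_term k t) $ i $ j) \<le> 0"
proof -
  define c where "c r = - (\<Sum>j\<in>UNIV. C $ r $ j)" for r
  define d where "d l r = (\<Sum>j\<in>UNIV. D l $ r $ j)" for l r
  have arrivals: "(\<Sum>j\<in>UNIV. arrival_term k t $ i $ j)
      = (\<Sum>l\<in>{1..k}. \<Sum>r\<in>UNIV. bmapP C D (k - l) t $ i $ r * d l r)" for k
    unfolding arrival_term_def sum_component d_def sum_row_matrix_mult[symmetric]
    by (rule sum.swap)
  have "(\<Sum>k\<le>n. \<Sum>l\<in>{1..k}. \<Sum>r\<in>UNIV. bmapP C D (k - l) t $ i $ r * d l r)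
      \<le> (\<Sum>m\<le>n. \<Sum>l\<in>{1..n}. \<Sum>r\<in>UNIV. bmapP C D m t $ i $ r * d l r)"
    by (rule sum_triangle_le_sum_square)
       (auto intro!: sum_nonneg mult_nonneg_nonneg bmapP_nonneg t D_nonneg simp: d_def)
  also have "\<dots> = (\<Sum>m\<le>n. \<Sum>r\<in>UNIV. bmapP C D m t $ i $ r * (\<Sum>l\<in>{1..n}. d l r))"
    by (simp add: sum_distrib_left) (intro sum.cong refl, rule sum.swap)
  also have "\<dots> \<le> (\<Sum>m\<le>n. \<Sum>r\<in>UNIV. bmapP C D m t $ i $ r * c r)"
    by (intro sum_mono mult_left_mono bmapP_nonneg t) (simp_all add: d_def c_def sum_D_row_le[simplified])
  finally show ?thesis
    by (simp add: sum.distrib sum_row_matrix_mult arrivals c_def sum_negf)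
qed

lemma sum_row_bmapP_le_1:
  assumes t: "t \<ge> 0"
  shows "(\<Sum>k\<le>n. \<Sum>j\<in>UNIV. bmapP C D k t $ i $ j) \<le> 1"
proof -
  define X where "X t = (\<Sum>k\<le>n. \<Sum>j\<in>UNIV. bmapP C D k t $ i $ j)" for t
  have X_deriv: "(X has_real_derivative
      (\<Sum>k\<le>n. \<Sum>j\<in>UNIV. (bmapP C D k x ** C + arrival_term k x) $ i $ j)) (at x within {0..})"
    if "x \<ge> 0" for x
    unfolding X_def by (intro DERIV_sum bmapP_has_real_derivative that)
  have "X t \<le> X 0"
  proof (rule DERIV_nonpos_imp_decreasing_open[OF t])
    fix x :: real
    assume x: "0 < x" "x < t"
    have "at x within {0..} = at x"
      by (rule at_within_interior) (use x in simp)
    then show "\<exists>y. DERIV X x :> y \<and> y \<le> 0"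
      using X_deriv[of x] sum_row_derivative_nonpos[where t=x and n=n and i=i] x by auto
  next
    have "continuous_on {0..} X"
      by (rule continuous_on_eq_continuous_within[THEN iffD2]) (auto intro: DERIV_continuous X_deriv)
    then show "continuous_on {0..t} X"
      by (rule continuous_on_subset) auto
  qed
  moreover have "X 0 = 1"
  proof -
    have "X 0 = (\<Sum>k\<le>n. if k = 0 then 1 else 0)"
      unfolding X_def by (intro sum.cong refl) (auto simp: bmapP_0 expC_0 bmapP_at_0 mat_one_entry)
    then show ?thesis by simp
  qed
  ultimately show ?thesis
    unfolding X_def by simp
qed

lemma sum_bmapP_le_1:
  assumes t: "t \<ge> 0"
  shows "(\<Sum>l\<le>n. bmapP C D l t $ i $ j) \<le> 1"
proof -
  have "(\<Sum>l\<le>n. bmapP C D l t $ i $ j) \<le> (\<Sum>l\<le>n. \<Sum>j\<in>UNIV. bmapP C D l t $ i $ j)"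
    by (intro sum_mono member_le_sum) (auto intro: bmapP_nonneg t)
  also have "\<dots> \<le> 1"
    by (rule sum_row_bmapP_le_1[OF t])
  finally show ?thesis .
qed

lemma bmapP_le_1: "t \<ge> 0 \<Longrightarrow> bmapP C D k t $ i $ j \<le> 1"
  using sum_bmapP_le_1[where t=t and n=k and i=i and j=j] member_le_sum[of k "{..k}" "\<lambda>l. bmapP C D l t $ i $ j"]
  by (auto intro: bmapP_nonneg order_trans)

end

section \<open>Positivity along arrival paths\<close>

lemma integral_pos_continuous:
  fixes f :: "real \<Rightarrow> real"
  assumes "continuous_on {0..t} f" "t > 0" "\<And>s. s \<in> {0..t} \<Longrightarrow> f s \<ge> 0"
    and "u \<in> {0..t}" "f u > 0"
  shows "integral {0..t} f > 0"
proof -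
  have "integral {0..t} f \<ge> 0"
    using assms integrable_continuous_interval by (intro Henstock_Kurzweil_Integration.integral_nonneg) auto
  moreover have "integral {0..t} f \<noteq> 0"
    using integral_eq_0_iff[OF assms(1-3)] assms(4,5) by auto
  ultimately show ?thesis by simp
qed

lemma matrix_mult_entry_ge:
  assumes "\<And>r. A $ i $ r \<ge> 0" "\<And>r. B $ r $ j \<ge> (0::real)"
  shows "A $ i $ k * B $ k $ j \<le> (A ** B) $ i $ j"
  unfolding matrix_mult_entry
  by (rule member_le_sum) (auto intro: mult_nonneg_nonneg assms)

context bmap
begin

definition D_edges :: "('m \<times> 'm) set" where
  "D_edges = {(a, b). \<exists>m\<ge>1. D m $ a $ b > 0}"

inductive arrival_path :: "'m \<Rightarrow> 'm \<Rightarrow> nat \<Rightarrow> bool" for i :: 'm where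
  no_arrival: "(i, j) \<in> C_edges\<^sup>* \<Longrightarrow> arrival_path i j 0"
| batch: "arrival_path i a l \<Longrightarrow> m \<ge> 1 \<Longrightarrow> D m $ a $ b > 0 \<Longrightarrow> (b, j) \<in> C_edges\<^sup>*
    \<Longrightarrow> arrival_path i j (l + m)"

lemma bmapP_mult_D_le_arrival_term:
  assumes "s \<ge> 0" "m \<ge> 1"
  shows "bmapP C D l s $ i $ a * D m $ a $ b \<le> arrival_term (l + m) s $ i $ b"
proof -
  have "bmapP C D l s $ i $ a * D m $ a $ b \<le> (bmapP C D (l + m - m) s ** D m) $ i $ b"
    using assms by (auto intro!: matrix_mult_entry_ge bmapP_nonneg D_nonneg)
  also have "\<dots> \<le> (\<Sum>l'\<in>{1..l + m}. (bmapP C D (l + m - l') s ** D l') $ i $ b)"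
    using assms
    by (intro member_le_sum[where f="\<lambda>l'. (bmapP C D (l + m - l') s ** D l') $ i $ b"])
       (auto intro!: matrix_mult_nonneg bmapP_nonneg D_nonneg)
  finally show ?thesis
    by (simp add: arrival_term_def sum_component)
qed

text \<open>The last batch of the path is placed at time \<open>t/2\<close>, which makes the integrand of the
  convolution positive there.\<close>

lemma bmapP_pos_of_arrival_path: "arrival_path i j l \<Longrightarrow> t > 0 \<Longrightarrow> bmapP C D l t $ i $ j > 0"
proof (induction j l arbitrary: t rule: arrival_path.induct)
  case (no_arrival j)
  then show ?case by (simp add: bmapP_0 expC_pos_of_path)
next
  case (batch a l m b j)
  have "0 < bmapP C D l (t/2) $ i $ a * D m $ a $ b"
    using batch by simp
  also have "\<dots> \<le> arrival_term (l + m) (t/2) $ i $ b"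
    using batch by (intro bmapP_mult_D_le_arrival_term) auto
  finally have "0 < arrival_term (l + m) (t/2) $ i $ b * expC (t - t/2) $ b $ j"
    using batch by (simp add: expC_pos_of_path)
  also have "\<dots> \<le> (arrival_term (l + m) (t/2) ** expC (t - t/2)) $ i $ j"
    using batch by (intro matrix_mult_entry_ge arrival_term_nonneg expC_nonneg) auto
  finally have "integral {0..t} (\<lambda>s. (arrival_term (l + m) s ** expC (t - s)) $ i $ j) > 0"
    using batch
    by (intro integral_pos_continuous[where u="t/2"] continuous_on_convolution
        matrix_mult_nonneg arrival_term_nonneg expC_nonneg) auto
  then show ?case
    using batch by (simp add: bmapP_eq_integral)
qed

lemma arrival_path_extend:
  assumes "(a, b) \<in> (C_edges \<union> D_edges)\<^sup>*" "arrival_path i a l"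
  shows "\<exists>l'\<ge>l. arrival_path i b l'"
  using assms
proof (induction rule: rtrancl_induct)
  case (step x y)
  then obtain l' where l': "l' \<ge> l" "arrival_path i x l'" by blast
  show ?case
  proof (cases "(x, y) \<in> C_edges")
    case True
    from l'(2) have "arrival_path i y l'"
    proof cases
      case no_arrival
      then show ?thesis using True by (auto intro: arrival_path.no_arrival rtrancl_into_rtrancl)
    next
      case (batch a' l'' m b')
      then show ?thesis using True by (metis arrival_path.batch rtrancl_into_rtrancl)
    qed
    then show ?thesis using l'(1) by blast
  next
    case False
    then obtain m where "m \<ge> 1" "D m $ x $ y > 0"
      using step(2) unfolding D_edges_def by blast
    then have "arrival_path i y (l' + m)"
      by (intro arrival_path.batch[OF l'(2)]) auto
    then show ?thesis using l'(1) by (intro exI[of _ "l' + m"]) auto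
  qed
qed blast

text \<open>Irreducibility lets the path return to the source of a \<open>D\<close>-edge arbitrarily often,
  so arbitrarily many arrivals are possible between any two phases.\<close>

lemma arrival_path_unbounded:
  assumes irr: "\<And>a b. (a, b) \<in> (C_edges \<union> D_edges)\<^sup>*" and edge: "(a0, b0) \<in> D_edges"
  shows "\<exists>l\<ge>n. arrival_path i j l"
proof -
  have "\<exists>l\<ge>n. arrival_path i a0 l"
  proof (induction n)
    case 0
    show ?case
      using arrival_path_extend[OF irr no_arrival[of i i]] by auto
  next
    case (Suc n)
    then obtain l where l: "l \<ge> n" "arrival_path i a0 l" by blast
    obtain m where m: "m \<ge> 1" "D m $ a0 $ b0 > 0"
      using edge unfolding D_edges_def by blast
    have "arrival_path i b0 (l + m)"
      by (rule batch[OF l(2) m]) simp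
    then obtain l' where "l' \<ge> l + m" "arrival_path i a0 l'"
      using arrival_path_extend[OF irr] by blast
    then show ?case
      using l(1) m(1) by (intro exI[of _ l']) auto
  qed
  then obtain l where l: "l \<ge> n" "arrival_path i a0 l" by blast
  obtain l' where "l' \<ge> l" "arrival_path i j l'"
    using arrival_path_extend[OF irr l(2)] by blast
  then show ?thesis
    using l(1) by (intro exI[of _ l']) auto
qed

lemma rtrancl_edges_of_irreducible:
  assumes "gen_irreducible (C + Dtot D)"
  shows "(a, b) \<in> (C_edges \<union> D_edges)\<^sup>*"
proof -
  have "(x, y) \<in> C_edges \<union> D_edges" if xy: "x \<noteq> y" "(C + Dtot D) $ x $ y > 0" for x y
  proof (cases "C $ x $ y > 0")
    case True
    then show ?thesis using xy(1) by (simp add: C_edges_def)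
  next
    case False
    then have "Dtot D $ x $ y \<noteq> 0"
      using xy C_off[OF xy(1)] by simp
    then obtain k where "D (Suc k) $ x $ y \<noteq> 0"
      unfolding Dtot_def by force
    then have "(x, y) \<in> D_edges"
      using D_nonneg[of "Suc k" x y] unfolding D_edges_def
      by (intro CollectI case_prodI exI[of _ "Suc k"]) simp
    then show ?thesis by blast
  qed
  then have "{(a, b). a \<noteq> b \<and> (C + Dtot D) $ a $ b > 0} \<subseteq> C_edges \<union> D_edges"
    by blast
  then show ?thesis
    using assms rtrancl_mono unfolding gen_irreducible_def by blast
qed

lemma D_edges_nonempty:
  assumes "arrival_rate D p > 0"
  shows "\<exists>a b. (a, b) \<in> D_edges"
proof (rule ccontr)
  assume empty: "\<nexists>a b. (a, b) \<in> D_edges"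
  have "D (Suc k) $ a $ b = 0" for k a b
  proof -
    have "\<not> D (Suc k) $ a $ b > 0"
      using empty unfolding D_edges_def by auto
    then show ?thesis
      using D_nonneg[of "Suc k" a b] by simp
  qed
  then have "arrival_rate D p = 0"
    by (simp add: arrival_rate_def)
  with assms show False by simp
qed

lemma bmapP_pos_beyond:
  assumes "gen_irreducible (C + Dtot D)" "arrival_rate D p > 0"
  shows "\<exists>l\<ge>k. \<forall>t>0. bmapP C D l t $ i $ j > 0"
proof -
  obtain a0 b0 where "(a0, b0) \<in> D_edges"
    using D_edges_nonempty[OF assms(2)] by blast
  from arrival_path_unbounded[OF rtrancl_edges_of_irreducible[OF assms(1)] this]
  obtain l where "l \<ge> k" "arrival_path i j l" by blast
  then show ?thesis
    using bmapP_pos_of_arrival_path by blast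
qed

end

section \<open>The matrices \<open>A(k)\<close> and \<open>A\<breve>(k)\<close>\<close>

lemma (in bmap) borel_measurable_bmapP: "(\<lambda>t. bmapP C D k t $ i $ j) \<in> borel_measurable borel"
proof (cases "k = 0")
  case True
  then show ?thesis by (simp add: bmapP_0 borel_measurable_continuous_onI continuous_on_expC)
next
  case False
  have "(\<lambda>t. bmapP C D k t $ i $ j) = (\<lambda>t. indicator {0..} t *\<^sub>R bmapP C D k t $ i $ j)"
    using False by (auto simp: bmapP_eq_integral indicator_def fun_eq_iff)
  also have "\<dots> \<in> borel_measurable borel"
    using continuous_entries_bmapP unfolding continuous_entries_def
    by (intro borel_measurable_continuous_on_indicator) auto
  finally show ?thesis .
qed

lemma Abreve_int_minus_one:
  "Abreve C D H \<mu> (int n - 1) = (\<mu> / (\<mu> + theta C)) *\<^sub>R Amat C D H n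
     + (if n = 1 then (theta C / (\<mu> + theta C)) *\<^sub>R mat 1 else 0)"
proof -
  consider "n = 0" | "n = 1" | "n \<ge> 2" by linarith
  then show ?thesis
  proof cases
    case 3
    then have "nat (int n - 1) + 1 = n" by simp
    with 3 show ?thesis by (simp add: Abreve_def)
  qed (simp_all add: Abreve_def)
qed

locale bmap_service = bmap C D + prob_space H
  for C :: "'m::finite mat" and D :: "nat \<Rightarrow> 'm mat" and H :: "real measure" +
  assumes sets_H: "sets H = sets borel"
    and AE_nonneg: "AE t in H. t \<ge> 0"
begin

lemma integrable_bmapP: "integrable H (\<lambda>t. bmapP C D k t $ i $ j)"
proof (rule integrable_const_bound[where B=1])
  show "AE t in H. norm (bmapP C D k t $ i $ j) \<le> 1"
    using AE_nonneg by eventually_elim (use bmapP_nonneg bmapP_le_1 in auto)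
  show "(\<lambda>t. bmapP C D k t $ i $ j) \<in> borel_measurable H"
    unfolding measurable_cong_sets[OF sets_H refl] by (rule borel_measurable_bmapP)
qed

lemma AE_bmapP_nonneg: "AE t in H. bmapP C D k t $ i $ j \<ge> 0"
  using AE_nonneg by eventually_elim (rule bmapP_nonneg)

lemma Amat_nonneg: "Amat C D H k $ i $ j \<ge> 0"
  unfolding Amat_def by (simp add: integral_nonneg_AE[OF AE_bmapP_nonneg])

lemma Amat_pos:
  assumes pos: "\<And>t. t > 0 \<Longrightarrow> bmapP C D k t $ i $ j > 0"
    and not_zero: "\<not> (AE t in H. t = 0)"
  shows "Amat C D H k $ i $ j > 0"
proof (rule ccontr)
  assume "\<not> ?thesis"
  then have "(\<integral>t. bmapP C D k t $ i $ j \<partial>H) = 0"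
    using Amat_nonneg[of k i j] by (simp add: Amat_def)
  then have "AE t in H. bmapP C D k t $ i $ j = 0"
    using integral_nonneg_eq_0_iff_AE[OF integrable_bmapP AE_bmapP_nonneg] by simp
  then have "AE t in H. t = 0"
    using AE_nonneg by eventually_elim (metis less_eq_real_def pos less_irrefl)
  with not_zero show False by simp
qed

lemma summable_Amat: "summable (\<lambda>l. Amat C D H l $ i $ j)"
proof (rule summableI_nonneg_bounded[where x=1])
  fix n
  have "(\<Sum>l<n. Amat C D H l $ i $ j) = (\<integral>t. (\<Sum>l<n. bmapP C D l t $ i $ j) \<partial>H)"
    unfolding Amat_def by (simp add: Bochner_Integration.integral_sum integrable_bmapP)
  also have "\<dots> \<le> (\<integral>t. 1 \<partial>H)"
  proof (rule integral_mono_AE)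
    show "AE t in H. (\<Sum>l<n. bmapP C D l t $ i $ j) \<le> 1"
      using AE_nonneg
    proof eventually_elim
      case (elim t)
      have "(\<Sum>l<n. bmapP C D l t $ i $ j) \<le> (\<Sum>l\<le>n. bmapP C D l t $ i $ j)"
        using elim by (intro sum_mono2 bmapP_nonneg) auto
      also have "\<dots> \<le> 1"
        using elim by (rule sum_bmapP_le_1)
      finally show ?case .
    qed
  qed (simp_all add: integrable_bmapP)
  finally show "(\<Sum>l<n. Amat C D H l $ i $ j) \<le> 1"
    by (simp add: prob_space)
qed (rule Amat_nonneg)

lemma sum_Amat_tail_pos:
  assumes "gen_irreducible (C + Dtot D)" "arrival_rate D p > 0" "\<not> (AE t in H. t = 0)"
  shows "(\<Sum>l. Amat C D H (l + k) $ i $ j) > 0"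
proof -
  obtain l where l: "l \<ge> k" "\<And>t. t > 0 \<Longrightarrow> bmapP C D l t $ i $ j > 0"
    using bmapP_pos_beyond[OF assms(1,2)] by blast
  have "Amat C D H ((l - k) + k) $ i $ j > 0"
    using Amat_pos[OF l(2) assms(3)] l(1) by simp
  then show ?thesis
    by (intro suminf_pos2 summable_ignore_initial_segment summable_Amat Amat_nonneg)
qed

lemma sum_Abreve_tail_pos:
  assumes "\<mu> > 0" and tail_pos: "(\<Sum>l. Amat C D H (l + k) $ i $ j) > 0"
  shows "(\<Sum>l. Abreve C D H \<mu> (int l + int k - 1) $ i $ j) > 0"
proof -
  define c where "c = \<mu> / (\<mu> + theta C)"
  define g where "g l = (if l + k = 1 then theta C / (\<mu> + theta C) * mat 1 $ i $ j else 0)" for l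
  have c_pos: "c > 0"
    using assms(1) theta_pos by (simp add: c_def)
  have terms: "Abreve C D H \<mu> (int l + int k - 1) $ i $ j = c * Amat C D H (l + k) $ i $ j + g l" for l
    using Abreve_int_minus_one[of C D H \<mu> "l + k"] by (simp add: c_def g_def)
  have g_nonneg: "g l \<ge> 0" for l
    using assms(1) theta_pos by (simp add: g_def mat_one_entry)
  have "summable g"
    by (rule summable_iff_shift[where k=2, THEN iffD1]) (simp add: g_def)
  moreover have A_summable: "summable (\<lambda>l. c * Amat C D H (l + k) $ i $ j)"
    by (intro summable_mult summable_ignore_initial_segment summable_Amat)
  ultimately have "(\<Sum>l. c * Amat C D H (l + k) $ i $ j)
      \<le> (\<Sum>l. c * Amat C D H (l + k) $ i $ j + g l)"
    using g_nonneg by (intro suminf_le summable_add) auto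
  moreover have "(\<Sum>l. c * Amat C D H (l + k) $ i $ j) > 0"
    using suminf_mult[OF summable_ignore_initial_segment[OF summable_Amat], of c k i j] tail_pos c_pos
    by simp
  ultimately show ?thesis
    unfolding terms by linarith
qed

end

theorem lemma8:
  fixes C :: "'m::finite mat" and D :: "nat \<Rightarrow> 'm mat" and H :: "real measure"
    and p :: "real^'m" and h \<mu> :: real
  assumes C_diag: "\<And>i. C $ i $ i < 0"
    and C_off: "\<And>i j. i \<noteq> j \<Longrightarrow> C $ i $ j \<ge> 0"
    and D_nonneg: "\<And>k i j. k \<ge> 1 \<Longrightarrow> D k $ i $ j \<ge> 0"
    and rows: "\<And>i. (\<lambda>k. \<Sum>j\<in>UNIV. D (Suc k) $ i $ j) sums (- (\<Sum>j\<in>UNIV. C $ i $ j))"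
    and irred: "gen_irreducible (C + Dtot D)"
    and stat: "stationary (C + Dtot D) p"
    and rate_summable: "\<And>i. summable (\<lambda>k. real (Suc k) * (\<Sum>j\<in>UNIV. D (Suc k) $ i $ j))"
    and rate_pos: "arrival_rate D p > 0"
    and H_prob: "prob_space H" and H_sets: "sets H = sets borel"
    and H_nonneg: "AE t in H. t \<ge> 0"
    and H_mean_int: "integrable H (\<lambda>t. t)"
    and h_def: "h = (\<integral>t. t \<partial>H)" and h_pos: "h > 0"
    and rho: "arrival_rate D p * h < 1"
    and mu_pos: "\<mu> > 0"
  shows "(\<forall>i. Amat C D H 0 $ i $ i > 0) \<and> (\<forall>i. Abreve C D H \<mu> (-1) $ i $ i > 0)
      \<and> (\<forall>k::nat. \<forall>i j. (\<Sum>l. Amat C D H (l + k) $ i $ j) > 0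
                      \<and> (\<Sum>l. Abreve C D H \<mu> (int l + int k - 1) $ i $ j) > 0)"
proof -
  interpret bmap_service C D H
    using C_diag C_off D_nonneg rows H_prob H_sets H_nonneg
    by (intro bmap_service.intro bmap.intro bmap_service_axioms.intro)
  have not_zero: "\<not> (AE t in H. t = 0)"
    using integral_eq_zero_AE[of "\<lambda>t. t" H] h_def h_pos by auto
  have A0_diag: "Amat C D H 0 $ i $ i > 0" for i
    using Amat_pos[OF _ not_zero] by (simp add: bmapP_0 expC_diag_pos)
  moreover have "Abreve C D H \<mu> (-1) $ i $ i > 0" for i
    using A0_diag[of i] mu_pos theta_pos by (simp add: Abreve_def)
  moreover have "(\<Sum>l. Amat C D H (l + k) $ i $ j) > 0" for k i j
    using sum_Amat_tail_pos[OF irred rate_pos not_zero] .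
  ultimately show ?thesis
    using sum_Abreve_tail_pos[OF mu_pos] by blast
qed

end
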